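(* Consider the excludable public good problem with $n$ players. Let $H:2^N\to\mathbb{R}_{\ge0}\cup\{\infty\}$ be normalized, monotone and symmetric, and let $\mathcal A$ be the VCG-based mechanism with function $H$. Suppose $\mathcal A$ always covers the incurred cost and is a $\rho$-approximation to the social cost for some $\rho<\frac{n^{(1-\delta)/2}}{4}$, where $0<\delta<1$ is a constant (assume $n^{1-\delta}$ and $n^{(1-\delta)/2}$ are integers). Then there is a valuation profile on which $\mathcal A$ serves a nonempty set (so the incurred cost is $1$), the sum of payments is at least $\frac{1-\delta}{2}\ln n-1$, and $\pi(ALG)\ge(\delta\ln n-1)\cdot\pi(OPT)$.
   Context: Excludable public good problem: players $N=\{1,\dots,n\}$, each player $i$ has a private value $v_i\ge0$ for being served; an outcome is a set $S\subseteq N$ of served players; the cost is $C(S)=1$ for $S\ne\emptyset$ and $C(\emptyset)=0$. $H$ is normalized if $H(\emptyset)=0$, monotone if $S\subseteq T\Rightarrow H(S)\le H(T)$, symmetric if $H(S)=H(T)$ whenever $|S|=|T|$. The VCG-based mechanism with $H$ outputs $ALG\in\arg\max_{S\subseteq N}\sum_{i\in S}v_i-H(S)$ (some tie-breaking), for each $i$ computes $ALG^{-i}\in\arg\max_{S\subseteq N\setminus\{i\}}\sum_{j\in S}v_j-H(S)$, and charges $p_i=\left[\sum_{j\in ALG^{-i}}v_j-H(ALG^{-i})\right]-\left[\sum_{j\in ALG\setminus\{i\}}v_j-H(ALG)\right]$. It always covers the cost if $\sum_ip_i\ge C(ALG)$ for every profile. Social cost: $\pi(S)=C(S)+\sum_{i\notin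 S}v_i$; $OPT$ minimizes $\pi$; a $\rho$-approximation means $\pi(ALG)\le\rho\,\pi(OPT)$ on every profile. $\ln$ is the natural logarithm. *)

theory Defs
  imports Complex_Main "HOL-Library.Extended_Real"
begin

text \<open>Players are N = {1..n}; valuations are functions nat => real (only values on N matter).
  H takes values in ereal (nonnegative reals or infinity).\<close>

definition players :: "nat \<Rightarrow> nat set" where
  "players n = {1..n}"

definition cost :: "nat set \<Rightarrow> real" where
  "cost S = (if S = {} then 0 else 1)"

definition valid_profile :: "nat \<Rightarrow> (nat \<Rightarrow> real) \<Rightarrow> bool" where
  "valid_profile n v \<longleftrightarrow> (\<forall>i\<in>players n. v i \<ge> 0)"

definition normalized :: "(nat set \<Rightarrow> ereal) \<Rightarrow> bool" where
  "normalized H \<longleftrightarrow> H {} = 0"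

definition monotone_on_players :: "nat \<Rightarrow> (nat set \<Rightarrow> ereal) \<Rightarrow> bool" where
  "monotone_on_players n H \<longleftrightarrow>
     (\<forall>S T. S \<subseteq> T \<and> T \<subseteq> players n \<longrightarrow> H S \<le> H T)"

definition symmetric_on_players :: "nat \<Rightarrow> (nat set \<Rightarrow> ereal) \<Rightarrow> bool" where
  "symmetric_on_players n H \<longleftrightarrow>
     (\<forall>S T. S \<subseteq> players n \<and> T \<subseteq> players n \<and> card S = card T \<longrightarrow> H S = H T)"

definition nonneg_on_players :: "nat \<Rightarrow> (nat set \<Rightarrow> ereal) \<Rightarrow> bool" where
  "nonneg_on_players n H \<longleftrightarrow> (\<forall>S. S \<subseteq> players n \<longrightarrow> H S \<ge> 0)"

definition vcg_obj :: "(nat set \<Rightarrow> ereal) \<Rightarrow> (nat \<Rightarrow> real) \<Rightarrow> nat set \<Rightarrow> ereal" where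
  "vcg_obj H v S = ereal (\<Sum>j\<in>S. v j) - H S"

definition is_argmax_on :: "(nat set \<Rightarrow> ereal) \<Rightarrow> (nat \<Rightarrow> real) \<Rightarrow> nat set \<Rightarrow> nat set \<Rightarrow> bool" where
  "is_argmax_on H v U S \<longleftrightarrow> S \<subseteq> U \<and> (\<forall>T. T \<subseteq> U \<longrightarrow> vcg_obj H v T \<le> vcg_obj H v S)"

text \<open>A VCG-based mechanism with function H, with a fixed (arbitrary) tie-breaking:
  ALG v is the chosen outcome, ALGm i v the chosen outcome without player i.\<close>
definition vcg_mechanism ::
  "nat \<Rightarrow> (nat set \<Rightarrow> ereal) \<Rightarrow> ((nat \<Rightarrow> real) \<Rightarrow> nat set)
     \<Rightarrow> (nat \<Rightarrow> (nat \<Rightarrow> real) \<Rightarrow> nat set) \<Rightarrow> bool" where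
  "vcg_mechanism n H ALG ALGm \<longleftrightarrow>
     (\<forall>v. valid_profile n v \<longrightarrow>
        is_argmax_on H v (players n) (ALG v) \<and>
        (\<forall>i\<in>players n. is_argmax_on H v (players n - {i}) (ALGm i v)))"

definition payment ::
  "(nat set \<Rightarrow> ereal) \<Rightarrow> ((nat \<Rightarrow> real) \<Rightarrow> nat set)
     \<Rightarrow> (nat \<Rightarrow> (nat \<Rightarrow> real) \<Rightarrow> nat set) \<Rightarrow> (nat \<Rightarrow> real) \<Rightarrow> nat \<Rightarrow> ereal" where
  "payment H ALG ALGm v i =
     vcg_obj H v (ALGm i v) - (ereal (\<Sum>j\<in>ALG v - {i}. v j) - H (ALG v))"

definition total_payment ::
  "nat \<Rightarrow> (nat set \<Rightarrow> ereal) \<Rightarrow> ((nat \<Rightarrow> real) \<Rightarrow> nat set)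
     \<Rightarrow> (nat \<Rightarrow> (nat \<Rightarrow> real) \<Rightarrow> nat set) \<Rightarrow> (nat \<Rightarrow> real) \<Rightarrow> ereal" where
  "total_payment n H ALG ALGm v = (\<Sum>i\<in>players n. payment H ALG ALGm v i)"

definition social_cost :: "nat \<Rightarrow> (nat \<Rightarrow> real) \<Rightarrow> nat set \<Rightarrow> real" where
  "social_cost n v S = cost S + (\<Sum>i\<in>players n - S. v i)"

definition opt_cost :: "nat \<Rightarrow> (nat \<Rightarrow> real) \<Rightarrow> real" where
  "opt_cost n v = Min (social_cost n v ` Pow (players n))"

end

theory Submission
  imports Defs
begin

text \<open>
  By symmetry \<open>H S = h |S|\<close> for a real function \<open>h\<close>.  Cost recovery on the profile where
  only the first \<open>j\<close> players have a huge value forces \<open>h j - h (j - 1) \<ge> 1/j\<close>, so \<open>h\<close> grows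
  at least like the harmonic numbers.  Now let the first \<open>a = n powr ((1 - \<delta>) / 2)\<close> players
  value the service slightly above the steepest chord slope of \<open>h\<close> ending at \<open>a\<close>, and the
  others at the largest level at which serving more players never pays off.  Exactly the first
  \<open>a\<close> players are served and together pay about \<open>h a \<ge> ln a\<close>, while the unserved players
  carry a social cost of about \<open>ln n - ln a\<close>; since \<open>OPT \<le> 1\<close>, this is the ratio.
\<close>

definition harm_gap :: "nat \<Rightarrow> nat \<Rightarrow> real" where
  "harm_gap p t = (\<Sum>j\<in>{p<..t}. 1 / real j)"

lemma harm_gap_self [simp]: "harm_gap p p = 0"
  by (simp add: harm_gap_def)

lemma harm_gap_Suc: "p \<le> t \<Longrightarrow> harm_gap p (Suc t) = harm_gap p t + 1 / real (Suc t)"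
proof -
  assume "p \<le> t"
  then have "{p<..Suc t} = insert (Suc t) {p<..t}" by auto
  then show ?thesis by (simp add: harm_gap_def)
qed

lemma harm_gap_split: "p \<le> t \<Longrightarrow> t \<le> N \<Longrightarrow> harm_gap p N = harm_gap p t + harm_gap t N"
proof -
  assume "p \<le> t" "t \<le> N"
  then have "{p<..N} = {p<..t} \<union> {t<..N}" by auto
  then show ?thesis unfolding harm_gap_def by (simp add: sum.union_disjoint ivl_disj_int)
qed

lemma harm_gap_nonneg: "0 \<le> harm_gap p t"
  unfolding harm_gap_def by (intro sum_nonneg) auto

lemma ln_diff_le_harm_gap:
  assumes "p \<le> t"
  shows "ln (real t + 1) - ln (real p + 1) \<le> harm_gap p t"
  using assms
proof (induction t rule: dec_induct)
  case (step m)
  have "ln (real (Suc m) + 1) - ln (real m + 1) = ln ((real (Suc m) + 1) / (real m + 1))"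
    by (rule ln_divide_pos[symmetric]) auto
  also have "\<dots> = ln (1 + 1 / (real m + 1))"
    by (simp add: field_simps)
  also have "\<dots> \<le> 1 / (real m + 1)"
    by (rule ln_add_one_self_le_self) simp
  finally have "ln (real (Suc m) + 1) - ln (real m + 1) \<le> 1 / real (Suc m)"
    by (simp add: add.commute)
  with step.IH show ?case
    using harm_gap_Suc[OF step(1)] by linarith
qed simp

lemma harm_gap_le: "p \<le> t \<Longrightarrow> harm_gap p t \<le> (real t - real p) / (real p + 1)"
proof -
  assume "p \<le> t"
  have "harm_gap p t \<le> (\<Sum>j\<in>{p<..t}. 1 / (real p + 1))"
    unfolding harm_gap_def by (intro sum_mono divide_left_mono) auto
  also have "\<dots> = (real t - real p) / (real p + 1)"
    using \<open>p \<le> t\<close> by (simp add: of_nat_diff)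
  finally show ?thesis .
qed

lemma harm_gap_ge: "p \<le> t \<Longrightarrow> (real t - real p) / real t \<le> harm_gap p t"
proof -
  assume "p \<le> t"
  have "(real t - real p) / real t = (\<Sum>j\<in>{p<..t}. 1 / real t)"
    using \<open>p \<le> t\<close> by (simp add: of_nat_diff)
  also have "\<dots> \<le> harm_gap p t"
    unfolding harm_gap_def by (intro sum_mono divide_left_mono) auto
  finally show ?thesis .
qed

lemma harm_gap_pos: "p < t \<Longrightarrow> 0 < harm_gap p t"
proof -
  assume "p < t"
  then have "0 < (real t - real p) / real t" by simp
  also have "\<dots> \<le> harm_gap p t" using harm_gap_ge \<open>p < t\<close> by simp
  finally show ?thesis .
qed

text \<open>The average of \<open>1/j\<close> over \<open>(p, t]\<close> decreases in \<open>t\<close>, since the terms do.\<close>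
lemma harm_gap_chord:
  assumes "p < t" "t \<le> N"
  shows "(real t - real p) * (harm_gap p N / (real N - real p)) \<le> harm_gap p t"
proof -
  have "harm_gap t N \<le> (real N - real t) / (real t + 1)"
    using harm_gap_le assms by simp
  also have "\<dots> \<le> (real N - real t) / real t"
    using assms by (intro divide_left_mono) auto
  finally have tail: "harm_gap t N \<le> (real N - real t) / real t" .
  have head: "(real t - real p) / real t \<le> harm_gap p t"
    using harm_gap_ge assms by simp
  have "(real t - real p) * harm_gap t N \<le> (real t - real p) * ((real N - real t) / real t)"
    using tail assms by (intro mult_left_mono) auto
  also have "\<dots> = (real N - real t) * ((real t - real p) / real t)"
    by simp
  also have "\<dots> \<le> (real N - real t) * harm_gap p t"
    using head assms by (intro mult_left_mono) auto
  finally have "(real t - real p) * harm_gap t N \<le> (real N - real t) * harm_gap p t" .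
  then have "(real t - real p) * harm_gap p N \<le> (real N - real p) * harm_gap p t"
    using harm_gap_split[of p t N] assms by (simp add: algebra_simps)
  then show ?thesis
    using assms by (simp add: field_simps)
qed

lemma harm_gap_div_le: "p \<le> N \<Longrightarrow> harm_gap p N / (real N - real p) \<le> 1 / (real p + 1)"
  using harm_gap_le[of p N] by (cases "p = N") (auto simp: divide_le_eq field_simps)

lemma ln_diff_le_harm_gap_scaled:
  assumes "1 \<le> p" "p \<le> N"
  shows "ln (real N) - ln (real p) \<le> 2 + harm_gap p N * (real N / (real N + 1))"
proof -
  have "harm_gap p N \<le> (real N - real p) / (real p + 1)"
    using harm_gap_le assms by simp
  also have "\<dots> \<le> real N + 1"
    using assms by (simp add: divide_le_eq field_simps)
  finally have "harm_gap p N - 1 \<le> harm_gap p N * (real N / (real N + 1))"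
    by (simp add: field_simps)
  moreover have "ln (real N + 1) - ln (real p + 1) \<le> harm_gap p N"
    using ln_diff_le_harm_gap assms by simp
  moreover have "ln (real N) \<le> ln (real N + 1)"
    using assms by simp
  moreover have "ln (real p + 1) \<le> ln (2 * real p)"
    using assms by simp
  moreover have "ln (2 * real p) \<le> 1 + ln (real p)"
    using assms ln_le_minus_one[of 2] by (simp add: ln_mult)
  ultimately show ?thesis by linarith
qed

lemma finite_players [simp]: "finite (players n)"
  and card_players [simp]: "card (players n) = n"
  by (simp_all add: players_def)

lemma social_cost_nonneg: "valid_profile n v \<Longrightarrow> 0 \<le> social_cost n v S"
proof -
  assume "valid_profile n v"
  then have "0 \<le> sum v (players n - S)"
    by (intro sum_nonneg) (auto simp: valid_profile_def)
  then show ?thesis by (simp add: social_cost_def cost_def)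
qed

lemma value_le_social_cost:
  assumes "valid_profile n v" "i \<in> players n" "i \<notin> S"
  shows "v i \<le> social_cost n v S"
proof -
  have "v i \<le> (\<Sum>j\<in>players n - S. v j)"
    using assms by (intro member_le_sum) (auto simp: valid_profile_def players_def)
  then show ?thesis by (simp add: social_cost_def cost_def add_increasing)
qed

lemma opt_cost_bounds:
  assumes "valid_profile n v"
  shows "0 \<le> opt_cost n v" "opt_cost n v \<le> 1"
proof -
  have fin: "finite (social_cost n v ` Pow (players n))"
    by (simp add: players_def)
  have "opt_cost n v \<in> social_cost n v ` Pow (players n)"
    unfolding opt_cost_def using fin by (intro Min_in) auto
  then show "0 \<le> opt_cost n v"
    using social_cost_nonneg[OF assms] by auto
  have "opt_cost n v \<le> social_cost n v (players n)"
    unfolding opt_cost_def using fin by (intro Min_le) auto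
  then show "opt_cost n v \<le> 1"
    by (simp add: social_cost_def cost_def split: if_splits)
qed

lemma mult_opt_cost_le_max: "valid_profile n v \<Longrightarrow> c * opt_cost n v \<le> max c 0"
  using opt_cost_bounds[of n v]
  by (cases "0 \<le> c") (auto intro: mult_left_le mult_nonpos_nonneg order_trans)

lemma mult_opt_cost_le_social_cost:
  assumes "valid_profile n v" "c \<le> social_cost n v S"
  shows "c * opt_cost n v \<le> social_cost n v S"
proof -
  have "max c 0 \<le> social_cost n v S"
    using assms social_cost_nonneg by simp
  then show ?thesis
    using mult_opt_cost_le_max[OF assms(1)] by (rule order_trans[rotated])
qed

definition step_profile :: "nat \<Rightarrow> real \<Rightarrow> real \<Rightarrow> nat \<Rightarrow> real" where
  "step_profile a y x i = (if i \<le> a then y else x)"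

lemma sum_step_profile:
  assumes "S \<subseteq> players n"
  shows "(\<Sum>i\<in>S. step_profile a y x i)
    = real (card (S \<inter> {1..a})) * y + real (card (S - {1..a})) * x"
proof -
  have fin: "finite S"
    using finite_subset[OF assms finite_players] .
  have "\<forall>i\<in>S. 1 \<le> i"
    using assms by (auto simp: players_def)
  then have "(\<Sum>i\<in>S \<inter> {1..a}. step_profile a y x i) = (\<Sum>i\<in>S \<inter> {1..a}. y)"
    and "(\<Sum>i\<in>S - {1..a}. step_profile a y x i) = (\<Sum>i\<in>S - {1..a}. x)"
    by (auto simp: step_profile_def intro!: sum.cong)
  then show ?thesis
    using sum.Int_Diff[OF fin, of "step_profile a y x" "{1..a}"] by simp
qed

lemma social_cost_step_profile:
  assumes "1 \<le> a" "a \<le> n"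
  shows "social_cost n (step_profile a y x) {1..a} = 1 + real (n - a) * x"
proof -
  have "players n - {1..a} = {a<..n}"
    by (auto simp: players_def)
  then have "(\<Sum>i\<in>players n - {1..a}. step_profile a y x i) = real (n - a) * x"
    by (simp add: step_profile_def)
  then show ?thesis
    using assms by (simp add: social_cost_def cost_def)
qed

text \<open>The witness \<open>y\<close> is the steepest slope of a chord of \<open>f\<close> ending at \<open>a\<close>, raised by \<open>\<epsilon>\<close>.\<close>
lemma exists_strict_supporting_price:
  fixes f :: "nat \<Rightarrow> real"
  assumes "0 < a" "0 < \<epsilon>"
  obtains y t\<^sub>0 where "t\<^sub>0 < a"
    "\<And>t. t < a \<Longrightarrow> real t * y - f t < real a * y - f a"
    "real a * y - f a \<le> real t\<^sub>0 * y - f t\<^sub>0 + real a * \<epsilon>"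
proof -
  define slope where "slope t = (f a - f t) / (real a - real t)" for t
  define s where "s = Max (slope ` {..<a})"
  have fin: "finite (slope ` {..<a})" and ne: "slope ` {..<a} \<noteq> {}"
    using assms by auto
  obtain t\<^sub>0 where t\<^sub>0: "t\<^sub>0 < a" "slope t\<^sub>0 = s"
    using Max_in[OF fin ne] unfolding s_def by auto
  have support: "real t * s - f t \<le> real a * s - f a" if "t < a" for t
  proof -
    have "slope t \<le> s"
      unfolding s_def using fin that by (intro Max_ge) auto
    then have "f a - f t \<le> s * (real a - real t)"
      using that by (simp add: slope_def pos_divide_le_eq)
    then show ?thesis by (simp add: algebra_simps)
  qed
  have touch: "real t\<^sub>0 * s - f t\<^sub>0 = real a * s - f a"
  proof -
    have "f a - f t\<^sub>0 = s * (real a - real t\<^sub>0)"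
      using t\<^sub>0 by (simp add: slope_def divide_eq_eq)
    then show ?thesis by (simp add: algebra_simps)
  qed
  show thesis
  proof (rule that[of t\<^sub>0 "s + \<epsilon>"])
    fix t assume "t < a"
    then have "real t * \<epsilon> < real a * \<epsilon>"
      using assms by simp
    then show "real t * (s + \<epsilon>) - f t < real a * (s + \<epsilon>) - f a"
      using support[OF \<open>t < a\<close>] by (simp add: algebra_simps)
  next
    have "0 \<le> real t\<^sub>0 * \<epsilon>"
      using assms by simp
    then show "real a * (s + \<epsilon>) - f a \<le> real t\<^sub>0 * (s + \<epsilon>) - f t\<^sub>0 + real a * \<epsilon>"
      using touch by (simp add: algebra_simps)
  qed (fact t\<^sub>0)
qed

locale bounded_vcg =
  fixes n :: nat and H :: "nat set \<Rightarrow> ereal"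
    and ALG :: "(nat \<Rightarrow> real) \<Rightarrow> nat set"
    and ALGm :: "nat \<Rightarrow> (nat \<Rightarrow> real) \<Rightarrow> nat set"
    and B :: real
  assumes H_norm: "normalized H"
    and H_mono: "monotone_on_players n H"
    and H_sym: "symmetric_on_players n H"
    and mech: "vcg_mechanism n H ALG ALGm"
    and social_cost_bounded: "valid_profile n v \<Longrightarrow> social_cost n v (ALG v) \<le> B"
begin

lemma ALG_subset: "valid_profile n v \<Longrightarrow> ALG v \<subseteq> players n"
  using mech by (auto simp: vcg_mechanism_def is_argmax_on_def)

lemma ALGm_subset: "valid_profile n v \<Longrightarrow> i \<in> players n \<Longrightarrow> ALGm i v \<subseteq> players n - {i}"
  using mech by (auto simp: vcg_mechanism_def is_argmax_on_def)

lemma vcg_obj_le_ALG: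
  "valid_profile n v \<Longrightarrow> T \<subseteq> players n \<Longrightarrow> vcg_obj H v T \<le> vcg_obj H v (ALG v)"
  using mech by (auto simp: vcg_mechanism_def is_argmax_on_def)

lemma vcg_obj_le_ALGm:
  "valid_profile n v \<Longrightarrow> i \<in> players n \<Longrightarrow> T \<subseteq> players n - {i}
    \<Longrightarrow> vcg_obj H v T \<le> vcg_obj H v (ALGm i v)"
  using mech by (auto simp: vcg_mechanism_def is_argmax_on_def)

lemma mem_ALG_if_gt_bound:
  assumes "valid_profile n v" "i \<in> players n" "B < v i"
  shows "i \<in> ALG v"
proof (rule ccontr)
  assume "i \<notin> ALG v"
  then have "v i \<le> social_cost n v (ALG v)"
    using value_le_social_cost assms by simp
  then show False
    using social_cost_bounded[OF assms(1)] assms(3) by simp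
qed

lemma H_players_not_infty: "H (players n) \<noteq> \<infinity>"
proof -
  define v where "v = (\<lambda>i::nat. max B 0 + 1)"
  have val: "valid_profile n v"
    by (simp add: valid_profile_def v_def)
  have "ALG v = players n"
    using ALG_subset[OF val] mem_ALG_if_gt_bound[OF val] by (auto simp: v_def)
  moreover have "vcg_obj H v {} \<le> vcg_obj H v (ALG v)"
    using vcg_obj_le_ALG[OF val] by simp
  ultimately have "0 \<le> ereal (\<Sum>j\<in>players n. v j) - H (players n)"
    using H_norm by (simp add: vcg_obj_def normalized_def zero_ereal_def)
  then show ?thesis by (cases "H (players n)") auto
qed

lemma H_finite: "S \<subseteq> players n \<Longrightarrow> \<bar>H S\<bar> \<noteq> \<infinity>"
proof -
  assume S: "S \<subseteq> players n"
  then have "H {} \<le> H S" "H S \<le> H (players n)"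
    using H_mono unfolding monotone_on_players_def by blast+
  then have "0 \<le> H S" "H S \<le> H (players n)"
    using H_norm by (simp_all add: normalized_def)
  then show ?thesis
    using H_players_not_infty by auto
qed

definition h :: "nat \<Rightarrow> real" where
  "h t = real_of_ereal (H {1..t})"

lemma H_eq_h: "S \<subseteq> players n \<Longrightarrow> H S = ereal (h (card S))"
proof -
  assume S: "S \<subseteq> players n"
  then have sub: "{1..card S} \<subseteq> players n"
    using card_mono[OF finite_players S] by (auto simp: players_def)
  then have "H S = H {1..card S}"
    using H_sym S unfolding symmetric_on_players_def by (metis card_atLeastAtMost diff_Suc_1)
  then show ?thesis
    unfolding h_def using H_finite[OF sub] by (simp add: ereal_real')
qed

lemma h_0 [simp]: "h 0 = 0"
  using H_norm by (simp add: h_def normalized_def)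

lemma h_mono: "s \<le> t \<Longrightarrow> t \<le> n \<Longrightarrow> h s \<le> h t"
proof -
  assume "s \<le> t" "t \<le> n"
  then have "{1..s} \<subseteq> players n" "{1..t} \<subseteq> players n" "H {1..s} \<le> H {1..t}"
    using H_mono by (auto simp: players_def monotone_on_players_def)
  then show ?thesis
    using H_eq_h[of "{1..s}"] H_eq_h[of "{1..t}"] by simp
qed

lemma h_nonneg: "t \<le> n \<Longrightarrow> 0 \<le> h t"
  using h_mono[of 0 t] by simp

definition obj :: "(nat \<Rightarrow> real) \<Rightarrow> nat set \<Rightarrow> real" where
  "obj v S = sum v S - h (card S)"

lemma vcg_obj_eq_obj: "S \<subseteq> players n \<Longrightarrow> vcg_obj H v S = ereal (obj v S)"
  by (simp add: vcg_obj_def obj_def H_eq_h)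

lemma obj_le_ALG: "valid_profile n v \<Longrightarrow> T \<subseteq> players n \<Longrightarrow> obj v T \<le> obj v (ALG v)"
  using vcg_obj_le_ALG[of v T] vcg_obj_eq_obj ALG_subset by simp

lemma obj_le_ALGm:
  assumes "valid_profile n v" "i \<in> players n" "T \<subseteq> players n - {i}"
  shows "obj v T \<le> obj v (ALGm i v)"
proof -
  have "T \<subseteq> players n" "ALGm i v \<subseteq> players n"
    using ALGm_subset[OF assms(1,2)] assms(3) by auto
  then show ?thesis
    using vcg_obj_le_ALGm[OF assms] by (simp add: vcg_obj_eq_obj)
qed

definition pay :: "(nat \<Rightarrow> real) \<Rightarrow> nat \<Rightarrow> real" where
  "pay v i = obj v (ALGm i v) - obj v (ALG v) + (if i \<in> ALG v then v i else 0)"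

lemma payment_eq:
  assumes "valid_profile n v" "i \<in> players n"
  shows "payment H ALG ALGm v i = ereal (pay v i)"
proof -
  have sub: "ALG v \<subseteq> players n" "ALGm i v \<subseteq> players n"
    using ALG_subset[OF assms(1)] ALGm_subset[OF assms] by auto
  then have "sum v (ALG v - {i}) = sum v (ALG v) - (if i \<in> ALG v then v i else 0)"
    using sum_diff1[of "ALG v" v i] finite_subset[OF sub(1) finite_players] by simp
  then show ?thesis
    using sub by (simp add: payment_def pay_def vcg_obj_eq_obj H_eq_h obj_def)
qed

lemma total_payment_eq:
  "valid_profile n v \<Longrightarrow> total_payment n H ALG ALGm v = ereal (\<Sum>i\<in>players n. pay v i)"
  by (simp add: total_payment_def payment_eq)

lemma pay_le:
  "valid_profile n v \<Longrightarrow> i \<in> players n \<Longrightarrow> pay v i \<le> (if i \<in> ALG v then v i else 0)"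
proof -
  assume "valid_profile n v" "i \<in> players n"
  then have "obj v (ALGm i v) \<le> obj v (ALG v)"
    using obj_le_ALG ALGm_subset by blast
  then show ?thesis by (simp add: pay_def)
qed

lemma pay_ge:
  "valid_profile n v \<Longrightarrow> i \<in> players n \<Longrightarrow> T \<subseteq> players n - {i}
    \<Longrightarrow> obj v T - obj v (ALG v) + (if i \<in> ALG v then v i else 0) \<le> pay v i"
  using obj_le_ALGm by (simp add: pay_def)

lemma obj_step_profile:
  "S \<subseteq> players n \<Longrightarrow> obj (step_profile a y x) S
    = real (card (S \<inter> {1..a})) * y + real (card (S - {1..a})) * x - h (card S)"
  by (simp add: obj_def sum_step_profile)

lemma obj_step_profile_less:
  assumes "a \<le> n" "x < y"
    and below: "\<And>t. t < a \<Longrightarrow> real t * y - h t < real a * y - h a"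
    and above: "\<And>t. a < t \<Longrightarrow> t \<le> n \<Longrightarrow> (real t - real a) * x < h t - h a"
    and S: "S \<subseteq> players n" "S \<noteq> {1..a}"
  shows "obj (step_profile a y x) S < obj (step_profile a y x) {1..a}"
proof -
  define c where "c = card (S \<inter> {1..a})"
  define b where "b = card (S - {1..a})"
  have fin: "finite S"
    using finite_subset[OF S(1) finite_players] .
  have card_S: "card S = c + b"
    unfolding c_def b_def by (rule card_Int_Diff[OF fin])
  have "c \<le> a"
    unfolding c_def using card_mono[of "{1..a}" "S \<inter> {1..a}"] by simp
  have "c + b \<le> n"
    using card_mono[OF finite_players S(1)] card_S by simp
  have obj_A: "obj (step_profile a y x) {1..a} = real a * y - h a"
    using assms(1) by (simp add: obj_step_profile players_def)
  have obj_S: "obj (step_profile a y x) S = real c * y + real b * x - h (c + b)"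
    using obj_step_profile[OF S(1)] card_S by (simp add: c_def b_def)
  consider "b = 0" | "0 < b" "c + b \<le> a" | "a < c + b"
    by linarith
  then show ?thesis
  proof cases
    case 1
    then have "S \<subset> {1..a}"
      using S fin by (auto simp: b_def)
    then have "c < a"
      using psubset_card_mono[of "{1..a}" S] card_S 1 by simp
    then show ?thesis
      using below obj_A obj_S 1 by simp
  next
    case 2
    have "real b * x < real b * y"
      using 2 \<open>x < y\<close> by simp
    moreover have "real (c + b) * y - h (c + b) \<le> real a * y - h a"
      using 2 below[of "c + b"] by (cases "c + b = a") auto
    ultimately show ?thesis
      using obj_A obj_S by (simp add: algebra_simps)
  next
    case 3
    have "(real a - real c) * x \<le> (real a - real c) * y"
      using \<open>c \<le> a\<close> \<open>x < y\<close> by (intro mult_left_mono) auto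
    moreover have "(real (c + b) - real a) * x < h (c + b) - h a"
      using above[OF 3 \<open>c + b \<le> n\<close>] by simp
    ultimately show ?thesis
      using obj_A obj_S by (simp add: algebra_simps)
  qed
qed

lemma ALG_step_profile:
  assumes "a \<le> n" "0 \<le> x" "x < y"
    and "\<And>t. t < a \<Longrightarrow> real t * y - h t < real a * y - h a"
    and "\<And>t. a < t \<Longrightarrow> t \<le> n \<Longrightarrow> (real t - real a) * x < h t - h a"
  shows "ALG (step_profile a y x) = {1..a}"
proof (rule ccontr)
  let ?v = "step_profile a y x"
  have val: "valid_profile n ?v"
    using assms(2,3) by (simp add: valid_profile_def step_profile_def)
  assume "ALG ?v \<noteq> {1..a}"
  then have "obj ?v (ALG ?v) < obj ?v {1..a}"
    using obj_step_profile_less[OF assms(1,3-5) ALG_subset[OF val]] by simp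
  moreover have "obj ?v {1..a} \<le> obj ?v (ALG ?v)"
    using obj_le_ALG[OF val] assms(1) by (simp add: players_def)
  ultimately show False by simp
qed

lemma obj_block_profile_le:
  assumes S: "S \<subseteq> players n" and "card (S \<inter> {1..j}) \<le> m" "m \<le> n" "h n \<le> L"
  shows "obj (step_profile j L 0) S \<le> real m * L - h m"
proof -
  define r where "r = card (S \<inter> {1..j})"
  have "r \<le> card S"
    unfolding r_def using finite_subset[OF S finite_players] by (intro card_mono) auto
  moreover have "card S \<le> n"
    using card_mono[OF finite_players S] by simp
  ultimately have "obj (step_profile j L 0) S \<le> real r * L - h r"
    using obj_step_profile[OF S] h_mono by (simp add: r_def)
  also have "\<dots> \<le> real m * L - h m"
  proof (cases "r = m")
    case False
    then have "1 \<le> real m - real r"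
      using assms(2) r_def by linarith
    moreover have "0 \<le> h r" "h m \<le> h n" "0 \<le> L"
      using h_nonneg h_mono assms(2-4) r_def by (auto intro: order_trans)
    moreover have "1 * L \<le> (real m - real r) * L"
      using \<open>1 \<le> real m - real r\<close> \<open>0 \<le> L\<close> by (rule mult_right_mono)
    ultimately have "h m - h r \<le> (real m - real r) * L"
      using assms(4) by linarith
    then show ?thesis by (simp add: algebra_simps)
  qed simp
  finally show ?thesis .
qed

lemma pay_step_profile_ge:
  assumes ALG_v: "ALG (step_profile a y x) = {1..a}" and "a \<le> n" "0 \<le> x" "0 \<le> y"
    and "t\<^sub>0 < a" "real a * y - h a \<le> real t\<^sub>0 * y - h t\<^sub>0 + \<delta>"
  shows "real a * (y - \<delta>) \<le> (\<Sum>i\<in>players n. pay (step_profile a y x) i)"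
proof -
  let ?v = "step_profile a y x"
  have val: "valid_profile n ?v"
    using assms by (simp add: valid_profile_def step_profile_def)
  have A: "{1..a} \<subseteq> players n"
    using assms by (auto simp: players_def)
  have obj_A: "obj ?v {1..a} = real a * y - h a"
    using obj_step_profile[OF A] by simp
  have pay_A: "y - \<delta> \<le> pay ?v i" if i: "i \<in> {1..a}" for i
  proof -
    have "t\<^sub>0 \<le> card ({1..a} - {i})"
      using i \<open>t\<^sub>0 < a\<close> by simp
    then obtain T where T: "T \<subseteq> {1..a} - {i}" "card T = t\<^sub>0"
      by (rule obtain_subset_with_card_n)
    then have T_A: "T \<inter> {1..a} = T" "T - {1..a} = {}" and "T \<subseteq> players n"
      using A by auto
    have "obj ?v T
        = real (card (T \<inter> {1..a})) * y + real (card (T - {1..a})) * x - h (card T)"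
      by (rule obj_step_profile[OF \<open>T \<subseteq> players n\<close>])
    then have "obj ?v T = real t\<^sub>0 * y - h t\<^sub>0"
      unfolding T_A using \<open>card T = t\<^sub>0\<close> by simp
    moreover have "T \<subseteq> players n - {i}"
      using T A by auto
    ultimately show ?thesis
      using pay_ge[OF val _ \<open>T \<subseteq> players n - {i}\<close>] i A ALG_v obj_A assms(6)
      by (force simp: step_profile_def)
  qed
  have pay_rest: "0 \<le> pay ?v i" if "i \<in> players n" "i \<notin> {1..a}" for i
  proof -
    have A_i: "{1..a} \<subseteq> players n - {i}"
      using that A by blast
    show ?thesis
      using pay_ge[OF val that(1) A_i] that(2) ALG_v by (simp split: if_splits)
  qed
  have "real a * (y - \<delta>) = (\<Sum>i\<in>players n \<inter> {1..a}. y - \<delta>)"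
    using A by (simp add: Int_absorb1)
  also have "\<dots> = (\<Sum>i\<in>players n. if i \<in> {1..a} then y - \<delta> else 0)"
    by (rule sum.inter_restrict) simp
  also have "\<dots> \<le> (\<Sum>i\<in>players n. pay ?v i)"
    using pay_A pay_rest by (intro sum_mono) auto
  finally show ?thesis .
qed

end

locale cost_covering_vcg = bounded_vcg +
  assumes covers: "valid_profile n v \<Longrightarrow> ereal (cost (ALG v)) \<le> total_payment n H ALG ALGm v"
begin

text \<open>
  On the profile giving a value above \<open>B\<close> and \<open>h n\<close> to the first \<open>j\<close> players only, each of
  them pays at most \<open>h j - h (j - 1)\<close>, while together they must cover the cost \<open>1\<close>.
\<close>
lemma h_increment_ge:
  assumes "1 \<le> j" "j \<le> n"
  shows "1 \<le> real j * (h j - h (j - 1))"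
proof -
  define L where "L = max B 0 + h n + 1"
  define v where "v = step_profile j L 0"
  have L: "B < L" "h n \<le> L" "0 \<le> L"
    using h_nonneg[of n] by (auto simp: L_def)
  have val: "valid_profile n v"
    using L by (simp add: valid_profile_def v_def step_profile_def)
  have J: "{1..j} \<subseteq> players n"
    using assms by (auto simp: players_def)
  have J_ALG: "{1..j} \<subseteq> ALG v"
    using mem_ALG_if_gt_bound[OF val] J L by (auto simp: v_def step_profile_def)
  have obj_ALG: "obj v (ALG v) = real j * L - h (card (ALG v))"
    using obj_step_profile[OF ALG_subset[OF val]] J_ALG by (simp add: v_def Int_absorb1)
  have "obj v {1..j} \<le> obj v (ALG v)"
    by (rule obj_le_ALG[OF val J])
  then have h_ALG: "h (card (ALG v)) \<le> h j"
    using obj_ALG obj_step_profile[OF J] by (simp add: v_def)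
  have pay_J: "pay v i \<le> h j - h (j - 1)" if i: "i \<in> {1..j}" for i
  proof -
    have S: "ALGm i v \<subseteq> players n - {i}"
      using ALGm_subset[OF val] i J by (meson subsetD)
    then have "card (ALGm i v \<inter> {1..j}) \<le> card ({1..j} - {i})"
      by (intro card_mono) auto
    moreover have "ALGm i v \<subseteq> players n"
      using S by blast
    ultimately have "obj v (ALGm i v) \<le> real (j - 1) * L - h (j - 1)"
      unfolding v_def using i assms L by (intro obj_block_profile_le) auto
    then show ?thesis
      using i J_ALG obj_ALG h_ALG assms
      by (simp add: pay_def v_def step_profile_def subset_iff of_nat_diff algebra_simps)
  qed
  have pay_rest: "pay v i \<le> 0" if "i \<in> players n" "i \<notin> {1..j}" for i
  proof -
    have "v i = 0"
      using that by (auto simp: v_def step_profile_def players_def)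
    then show ?thesis
      using pay_le[OF val that(1)] by (cases "i \<in> ALG v") simp_all
  qed
  have "ALG v \<noteq> {}"
    using J_ALG assms by auto
  then have "1 \<le> (\<Sum>i\<in>players n. pay v i)"
    using covers[OF val] by (simp add: total_payment_eq[OF val] cost_def)
  also have "\<dots> \<le> (\<Sum>i\<in>players n. if i \<in> {1..j} then h j - h (j - 1) else 0)"
    using pay_J pay_rest by (intro sum_mono) auto
  also have "\<dots> = (\<Sum>i\<in>players n \<inter> {1..j}. h j - h (j - 1))"
    by (rule sum.inter_restrict[symmetric]) simp
  also have "\<dots> = real j * (h j - h (j - 1))"
    using J by (simp add: Int_absorb1)
  finally show ?thesis .
qed

lemma harm_gap_le_h_diff: "p \<le> t \<Longrightarrow> t \<le> n \<Longrightarrow> harm_gap p t \<le> h t - h p"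
proof (induction t rule: dec_induct)
  case (step m)
  have "1 \<le> real (Suc m) * (h (Suc m) - h m)"
    using h_increment_ge[of "Suc m"] step by simp
  then have "1 / real (Suc m) \<le> h (Suc m) - h m"
    by (simp add: divide_le_eq mult.commute del: of_nat_Suc)
  then show ?case
    using step harm_gap_Suc[OF step(1)] by simp
qed simp

lemma ln_le_h:
  assumes "1 \<le> t" "t \<le> n"
  shows "ln (real t) \<le> h t"
proof -
  have "ln (real t + 1) \<le> h t"
    using ln_diff_le_harm_gap[of 0 t] harm_gap_le_h_diff[of 0 t] assms by simp
  moreover have "ln (real t) \<le> ln (real t + 1)"
    using assms by simp
  ultimately show ?thesis by linarith
qed

text \<open>
  Since \<open>h\<close> grows at least like the harmonic numbers, the value \<open>x\<close> of the unserved
  players can be taken close to the average of \<open>1/j\<close> over \<open>(a, n]\<close>.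
\<close>
lemma exists_profile_serving_prefix:
  assumes "1 \<le> a" "a \<le> n"
  shows "\<exists>v. valid_profile n v \<and> ALG v = {1..a}
    \<and> ereal (h a - 1) \<le> total_payment n H ALG ALGm v
    \<and> social_cost n v (ALG v) = 1 + harm_gap a n * (real n / (real n + 1))"
proof -
  obtain y t\<^sub>0 where "t\<^sub>0 < a"
    and below: "\<And>t. t < a \<Longrightarrow> real t * y - h t < real a * y - h a"
    and near: "real a * y - h a \<le> real t\<^sub>0 * y - h t\<^sub>0 + real a * (1 / real a ^ 2)"
    by (rule exists_strict_supporting_price[of a "1 / real a ^ 2" h]) (use assms in auto)
  define x where "x = harm_gap a n / (real n - real a) * (real n / (real n + 1))"
  define v where "v = step_profile a y x"
  have "1 \<le> h a"
    using h_increment_ge[of 1] h_mono[of 1 a] assms by simp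
  also have "h a < real a * y"
    using below[of 0] assms by simp
  finally have y_gt: "1 / real a < y"
    using assms by (simp add: divide_less_eq mult.commute)
  have "0 \<le> x"
    using harm_gap_nonneg assms by (simp add: x_def)
  have "x \<le> 1 / (real a + 1) * 1"
    unfolding x_def using harm_gap_div_le[OF assms(2)] harm_gap_nonneg[of a n] assms
    by (intro mult_mono) auto
  also have "\<dots> < 1 / real a"
    using assms by (simp add: frac_less2)
  finally have "x < y"
    using y_gt by simp
  have above: "(real t - real a) * x < h t - h a" if "a < t" "t \<le> n" for t
  proof -
    have "(real t - real a) * x
        = (real t - real a) * (harm_gap a n / (real n - real a)) * (real n / (real n + 1))"
      by (simp add: x_def)
    also have "\<dots> \<le> harm_gap a t * (real n / (real n + 1))"
      using harm_gap_chord[OF that] by (intro mult_right_mono) auto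
    also have "\<dots> < harm_gap a t"
      using harm_gap_pos[OF that(1)] by (simp add: field_simps)
    also have "\<dots> \<le> h t - h a"
      using harm_gap_le_h_diff that by simp
    finally show ?thesis .
  qed
  have val: "valid_profile n v"
    using \<open>0 \<le> x\<close> \<open>x < y\<close> by (simp add: valid_profile_def v_def step_profile_def)
  have ALG_v: "ALG v = {1..a}"
    unfolding v_def using assms(2) \<open>0 \<le> x\<close> \<open>x < y\<close> below above by (rule ALG_step_profile)
  have "real a * (y - 1 / real a) \<le> (\<Sum>i\<in>players n. pay v i)"
    unfolding v_def
    using pay_step_profile_ge[OF ALG_v[unfolded v_def] assms(2) \<open>0 \<le> x\<close> _ \<open>t\<^sub>0 < a\<close>] near
      \<open>x < y\<close> \<open>0 \<le> x\<close> assms by (simp add: power2_eq_square)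
  then have "ereal (h a - 1) \<le> total_payment n H ALG ALGm v"
    using \<open>h a < real a * y\<close> assms by (simp add: total_payment_eq[OF val] right_diff_distrib)
  moreover have "social_cost n v (ALG v) = 1 + harm_gap a n * (real n / (real n + 1))"
    using social_cost_step_profile[OF assms] ALG_v assms
    by (cases "a = n") (simp_all add: v_def x_def of_nat_diff)
  ultimately show ?thesis
    using val ALG_v by blast
qed

lemma exists_profile_log_bounds:
  assumes "1 \<le> a" "a \<le> n"
  shows "\<exists>v. valid_profile n v \<and> ALG v \<noteq> {}
    \<and> ereal (ln (real a) - 1) \<le> total_payment n H ALG ALGm v
    \<and> ln (real n) - ln (real a) - 1 \<le> social_cost n v (ALG v)"
proof -
  obtain v where v: "valid_profile n v" "ALG v = {1..a}"
    "ereal (h a - 1) \<le> total_payment n H ALG ALGm v"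
    "social_cost n v (ALG v) = 1 + harm_gap a n * (real n / (real n + 1))"
    using exists_profile_serving_prefix[OF assms] by blast
  have "ereal (ln (real a) - 1) \<le> ereal (h a - 1)"
    using ln_le_h[OF assms] by simp
  then have "ereal (ln (real a) - 1) \<le> total_payment n H ALG ALGm v"
    using v(3) by (rule order_trans)
  moreover have "ln (real n) - ln (real a) - 1 \<le> social_cost n v (ALG v)"
    using ln_diff_le_harm_gap_scaled[OF assms] v(4) by linarith
  moreover have "ALG v \<noteq> {}"
    using v(2) assms by simp
  ultimately show ?thesis
    using v(1) by blast
qed

end

theorem theorem5p1:
  fixes n :: nat and H :: "nat set \<Rightarrow> ereal"
    and ALG :: "(nat \<Rightarrow> real) \<Rightarrow> nat set"
    and ALGm :: "nat \<Rightarrow> (nat \<Rightarrow> real) \<Rightarrow> nat set"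
    and \<rho> \<delta> :: real
  assumes n_pos: "0 < n"
    and H_nonneg: "nonneg_on_players n H"
    and H_norm: "normalized H"
    and H_mono: "monotone_on_players n H"
    and H_sym: "symmetric_on_players n H"
    and mech: "vcg_mechanism n H ALG ALGm"
    and covers: "\<forall>v. valid_profile n v \<longrightarrow> total_payment n H ALG ALGm v \<ge> ereal (cost (ALG v))"
    and approx: "\<forall>v. valid_profile n v \<longrightarrow> social_cost n v (ALG v) \<le> \<rho> * opt_cost n v"
    and rho_bound: "\<rho> < real n powr ((1 - \<delta>) / 2) / 4"
    and delta: "0 < \<delta>" "\<delta> < 1"
    and int1: "\<exists>k::nat. real n powr (1 - \<delta>) = real k"
    and int2: "\<exists>k::nat. real n powr ((1 - \<delta>) / 2) = real k"
  shows "\<exists>v. valid_profile n v \<and> ALG v \<noteq> {} \<and>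
           total_payment n H ALG ALGm v \<ge> ereal ((1 - \<delta>) / 2 * ln (real n) - 1) \<and>
           social_cost n v (ALG v) \<ge> (\<delta> * ln (real n) - 1) * opt_cost n v"
proof -
  interpret cost_covering_vcg n H ALG ALGm "max \<rho> 0"
    using H_norm H_mono H_sym mech covers approx mult_opt_cost_le_max
    by unfold_locales (blast intro: order_trans)+
  obtain k :: nat where k: "real n powr ((1 - \<delta>) / 2) = real k"
    using int2 by blast
  have "1 \<le> k" "k \<le> n"
    using k powr_mono[of "(1 - \<delta>) / 2" 1 "real n"] ge_one_powr_ge_zero[of "real n" "(1 - \<delta>) / 2"]
      n_pos delta
    by (auto simp flip: of_nat_le_iff)
  moreover have ln_k: "ln (real k) = (1 - \<delta>) / 2 * ln (real n)"
    using arg_cong[OF k, of ln] n_pos by (simp add: ln_powr)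
  ultimately obtain v where v: "valid_profile n v" "ALG v \<noteq> {}"
    "ereal ((1 - \<delta>) / 2 * ln (real n) - 1) \<le> total_payment n H ALG ALGm v"
    "ln (real n) - ln (real k) - 1 \<le> social_cost n v (ALG v)"
    using exists_profile_log_bounds by metis
  have "ln (real n) - ln (real k) - \<delta> * ln (real n) = (1 - \<delta>) / 2 * ln (real n)"
    using ln_k by (simp add: algebra_simps)
  moreover have "0 \<le> (1 - \<delta>) / 2 * ln (real n)"
    using delta n_pos by simp
  ultimately have "\<delta> * ln (real n) - 1 \<le> social_cost n v (ALG v)"
    using v(4) by linarith
  then show ?thesis
    using v mult_opt_cost_le_social_cost by blast
qed

end
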